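(* Suppose the loss $f\colon\Theta\to\mathbb{R}$ is convex. Then for the core Two-Tailed Averaging algorithm run on any sequence of iterates $(\theta_t)$, the sequence $(F_N)$ of losses of the short averages at switch points is monotonically non-increasing: $F_{N+1}\le F_N$ for every $N\in\mathbb{N}$ for which the $(N+1)$-th switch point exists.
   Context: Let $\Theta=\mathbb{R}^d$, let $(\theta_t)_{t\in\mathbb{N}_0}$ be a sequence in $\Theta$, let $f\colon\Theta\to\mathbb{R}$ be a loss function, and let $E\in\mathbb{N}$ be the evaluation period. For integers $t\ge \Delta\ge 1$ write $\mathrm{avg}(t,\Delta)=\frac{1}{\Delta}\sum_{i=t+1-\Delta}^{t}\theta_i$. Core Two-Tailed Averaging: it maintains integers $S,L$ and vectors $\theta^S,\theta^L$, initially $S=L=0$, $\theta^S=\theta^L=0$. For $t=1,2,\dots$: first $\theta_t$ is added to both averages, i.e. $\theta^S\leftarrow\theta^S+(\theta_t-\theta^S)/(S+1)$, $S\leftarrow S+1$, and $\theta^L\leftarrow\theta^L+(\theta_t-\theta^L)/(L+1)$, $L\leftarrow L+1$ (so $\theta^S=\mathrm{avg}(t,S)$, $\theta^L=\mathrm{avg}(t,L)$). Then, if $E$ divides $t$: if $f(\theta^S)\le f(\theta^L)$, a switch is performed: $L\leftarrow S$, $\theta^L\leftarrow\theta^S$, $S\leftarrow 0$. $S'(t),\theta^{S'}(t)$ denote the values of $S,\theta^S$ in the $t$-th pass after $\theta_t$ has been added but before the possible switch. A time step $n$ is a switch point if a switch is performed at $t=n$. For $N\in\mathbb{N}$: $Q_N$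 is the $N$-th switch point (in increasing order), $F_N=f(\theta^{S'}(Q_N))$, and $S_N=S'(Q_N)$. *)

theory Defs
  imports "HOL-Analysis.Analysis"
begin

text \<open>State of core Two-Tailed Averaging: (S, L, theta^S, theta^L).\<close>
type_synonym 'v tta_state = "nat \<times> nat \<times> 'v \<times> 'v"

fun tta_add :: "'v::real_vector \<Rightarrow> 'v tta_state \<Rightarrow> 'v tta_state" where
  "tta_add x (S, L, aS, aL) =
     (S + 1, L + 1, aS + (x - aS) /\<^sub>R real (S + 1), aL + (x - aL) /\<^sub>R real (L + 1))"

fun tta_state :: "('v::real_vector \<Rightarrow> real) \<Rightarrow> nat \<Rightarrow> (nat \<Rightarrow> 'v) \<Rightarrow> nat \<Rightarrow> 'v tta_state" where
  "tta_state f E th 0 = (0, 0, 0, 0)"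
| "tta_state f E th (Suc t) =
     (case tta_add (th (Suc t)) (tta_state f E th t) of (S, L, aS, aL) \<Rightarrow>
        if E dvd Suc t \<and> f aS \<le> f aL then (0, S, aS, aS) else (S, L, aS, aL))"

definition tta_pre :: "('v::real_vector \<Rightarrow> real) \<Rightarrow> nat \<Rightarrow> (nat \<Rightarrow> 'v) \<Rightarrow> nat \<Rightarrow> 'v tta_state" where
  "tta_pre f E th t = tta_add (th t) (tta_state f E th (t - 1))"

definition S' :: "('v::real_vector \<Rightarrow> real) \<Rightarrow> nat \<Rightarrow> (nat \<Rightarrow> 'v) \<Rightarrow> nat \<Rightarrow> nat" where
  "S' f E th t = fst (tta_pre f E th t)"

definition thetaS' :: "('v::real_vector \<Rightarrow> real) \<Rightarrow> nat \<Rightarrow> (nat \<Rightarrow> 'v) \<Rightarrow> nat \<Rightarrow> 'v" where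
  "thetaS' f E th t = fst (snd (snd (tta_pre f E th t)))"

definition thetaL' :: "('v::real_vector \<Rightarrow> real) \<Rightarrow> nat \<Rightarrow> (nat \<Rightarrow> 'v) \<Rightarrow> nat \<Rightarrow> 'v" where
  "thetaL' f E th t = snd (snd (snd (tta_pre f E th t)))"

definition switch_point :: "('v::real_vector \<Rightarrow> real) \<Rightarrow> nat \<Rightarrow> (nat \<Rightarrow> 'v) \<Rightarrow> nat \<Rightarrow> bool" where
  "switch_point f E th n \<longleftrightarrow> 1 \<le> n \<and> E dvd n \<and> f (thetaS' f E th n) \<le> f (thetaL' f E th n)"

definition switch_count :: "('v::real_vector \<Rightarrow> real) \<Rightarrow> nat \<Rightarrow> (nat \<Rightarrow> 'v) \<Rightarrow> nat \<Rightarrow> nat" where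
  "switch_count f E th n = card {m \<in> {1..n}. switch_point f E th m}"

definition switch_exists :: "('v::real_vector \<Rightarrow> real) \<Rightarrow> nat \<Rightarrow> (nat \<Rightarrow> 'v) \<Rightarrow> nat \<Rightarrow> bool" where
  "switch_exists f E th N \<longleftrightarrow> (\<exists>n. switch_point f E th n \<and> switch_count f E th n = N)"

definition Q :: "('v::real_vector \<Rightarrow> real) \<Rightarrow> nat \<Rightarrow> (nat \<Rightarrow> 'v) \<Rightarrow> nat \<Rightarrow> nat" where
  "Q f E th N = (LEAST n. switch_point f E th n \<and> switch_count f E th n = N)"

definition F :: "('v::real_vector \<Rightarrow> real) \<Rightarrow> nat \<Rightarrow> (nat \<Rightarrow> 'v) \<Rightarrow> nat \<Rightarrow> real" where
  "F f E th N = f (thetaS' f E th (Q f E th N))"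

end

theory Submission
  imports Defs
begin

text \<open>Right after a switch the long average is the previous short average \<open>a\<^sub>0\<close> (weight \<open>S\<^sub>0\<close>),
  and until the next switch both averages receive the same iterates, so the long average is
  always the weighted mean of \<open>a\<^sub>0\<close> and the current short average. At the next switch the short
  average is no worse than that mean, hence by convexity no worse than \<open>a\<^sub>0\<close>.\<close>

lemma convex_on_le_of_le_weighted_mean:
  fixes f :: "'v::real_vector \<Rightarrow> real"
  assumes "convex_on UNIV f" and "0 < a" and "0 \<le> b"
    and mean: "(a + b) *\<^sub>R z = a *\<^sub>R x + b *\<^sub>R y"
    and "f y \<le> f z"
  shows "f y \<le> f x"
proof -
  define t where "t = b / (a + b)"
  have t: "0 \<le> t" "t \<le> 1" "1 - t = a / (a + b)"
    using assms(2,3) by (auto simp: t_def field_simps)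
  have "z = (1 / (a + b)) *\<^sub>R ((a + b) *\<^sub>R z)"
    using assms(2,3) by simp
  also have "\<dots> = (1 - t) *\<^sub>R x + t *\<^sub>R y"
    unfolding mean t(3) by (simp add: scaleR_right_distrib t_def)
  finally have "f z \<le> (1 - t) * f x + t * f y"
    using convex_onD[OF assms(1) t(1,2)] by simp
  with \<open>f y \<le> f z\<close> have "(1 - t) * f y \<le> (1 - t) * f x"
    by (simp add: algebra_simps)
  moreover have "0 < 1 - t"
    using t(3) assms(2,3) by simp
  ultimately show ?thesis
    by simp
qed

lemma switch_count_Suc:
  "switch_count f E th (Suc n) =
     switch_count f E th n + (if switch_point f E th (Suc n) then 1 else 0)"
proof -
  have "{m \<in> {1..Suc n}. switch_point f E th m} =
        {m \<in> {1..n}. switch_point f E th m} \<union>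
        (if switch_point f E th (Suc n) then {Suc n} else {})"
    by (auto simp: le_Suc_eq)
  then show ?thesis
    unfolding switch_count_def by (simp add: card_insert_if)
qed

lemma switch_count_mono: "a \<le> b \<Longrightarrow> switch_count f E th a \<le> switch_count f E th b"
  by (induction b rule: dec_induct) (auto simp: switch_count_Suc)

lemma switch_count_less:
  assumes "switch_point f E th b" and "a < b"
  shows "switch_count f E th a < switch_count f E th b"
proof -
  obtain c where "b = Suc c" "a \<le> c"
    using assms(2) by (cases b) auto
  then show ?thesis
    using switch_count_mono[of a c f E th] assms(1) by (simp add: switch_count_Suc)
qed

lemma switch_point_of_switch_count:
  assumes "1 \<le> N" and "N \<le> switch_count f E th n"
  shows "\<exists>m\<le>n. switch_point f E th m \<and> switch_count f E th m = N"
  using assms(2)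
proof (induction n)
  case 0
  then show ?case
    using assms(1) by (simp add: switch_count_def)
next
  case (Suc n)
  then show ?case
    by (cases "N \<le> switch_count f E th n")
       (auto simp: switch_count_Suc le_Suc_eq split: if_splits)
qed

lemma Q_eqI:
  assumes "switch_point f E th m" and "switch_count f E th m = N"
  shows "Q f E th N = m"
  unfolding Q_def
proof (rule Least_equality)
  show "\<And>n. switch_point f E th n \<and> switch_count f E th n = N \<Longrightarrow> m \<le> n"
    using assms switch_count_less by (metis less_irrefl not_le)
qed (use assms in simp)

lemma tta_state_switch:
  assumes "switch_point f E th (Suc t)" and "tta_pre f E th (Suc t) = (S, L, aS, aL)"
  shows "tta_state f E th (Suc t) = (0, S, aS, aS)"
  using assms by (simp add: switch_point_def tta_pre_def thetaS'_def thetaL'_def)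

lemma tta_state_no_switch:
  assumes "\<not> switch_point f E th (Suc t)"
  shows "tta_state f E th (Suc t) = tta_add (th (Suc t)) (tta_state f E th t)"
  using assms
  by (auto simp: switch_point_def tta_pre_def thetaS'_def thetaL'_def split: prod.splits)

lemma fst_tta_pre: "0 < t \<Longrightarrow> fst (tta_pre f E th t) = Suc (fst (tta_state f E th (t - 1)))"
  by (cases "tta_state f E th (t - 1)") (simp add: tta_pre_def)

definition merged_with :: "'v::real_vector \<Rightarrow> nat \<Rightarrow> 'v tta_state \<Rightarrow> bool" where
  "merged_with a0 S0 st = (case st of (S, L, aS, aL) \<Rightarrow>
     L = S0 + S \<and> real L *\<^sub>R aL = real S0 *\<^sub>R a0 + real S *\<^sub>R aS)"

lemma scaleR_running_mean:
  fixes a x :: "'v::real_vector"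
  shows "real (Suc n) *\<^sub>R (a + (x - a) /\<^sub>R real (Suc n)) = real n *\<^sub>R a + x"
proof -
  have "real (Suc n) *\<^sub>R (a + (x - a) /\<^sub>R real (Suc n)) = real (Suc n) *\<^sub>R a + (x - a)"
    by (simp add: scaleR_right_distrib)
  then show ?thesis
    by (simp add: algebra_simps)
qed

lemma merged_with_tta_add:
  assumes "merged_with a0 S0 st"
  shows "merged_with a0 S0 (tta_add x st)"
proof (cases st)
  case (fields S L aS aL)
  with assms have "L = S0 + S" "real L *\<^sub>R aL = real S0 *\<^sub>R a0 + real S *\<^sub>R aS"
    by (auto simp: merged_with_def)
  moreover have "real (Suc L) *\<^sub>R (aL + (x - aL) /\<^sub>R real (Suc L)) = real L *\<^sub>R aL + x"
    "real (Suc S) *\<^sub>R (aS + (x - aS) /\<^sub>R real (Suc S)) = real S *\<^sub>R aS + x"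
    by (rule scaleR_running_mean)+
  ultimately show ?thesis
    using fields by (simp add: merged_with_def)
qed

lemma merged_with_until_next_switch:
  assumes "switch_point f E th m" and "tta_pre f E th m = (S0, L0, a0, aL0)"
    and "m \<le> t" and "switch_count f E th t = switch_count f E th m"
  shows "merged_with a0 S0 (tta_state f E th t)"
  using assms(3,4)
proof (induction t rule: dec_induct)
  case base
  obtain m' where "m = Suc m'"
    using assms(1) by (cases m) (auto simp: switch_point_def)
  then have "tta_state f E th m = (0, S0, a0, a0)"
    using tta_state_switch assms(1,2) by blast
  then show ?case
    by (simp add: merged_with_def)
next
  case (step t)
  have "switch_count f E th m \<le> switch_count f E th t"
    using switch_count_mono step.hyps(1) by blast
  moreover have "switch_count f E th t \<le> switch_count f E th (Suc t)"
    by (simp add: switch_count_Suc)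
  ultimately have "\<not> switch_point f E th (Suc t)" "switch_count f E th t = switch_count f E th m"
    using step.prems by (auto simp: switch_count_Suc)
  then show ?case
    using step.IH tta_state_no_switch merged_with_tta_add by metis
qed

lemma loss_short_average_next_switch_le:
  fixes f :: "'v::real_vector \<Rightarrow> real"
  assumes "convex_on UNIV f"
    and "switch_point f E th m" and "switch_point f E th n"
    and "switch_count f E th n = Suc (switch_count f E th m)"
  shows "f (thetaS' f E th n) \<le> f (thetaS' f E th m)"
proof -
  have "m < n"
    using switch_count_mono[of n m f E th] assms(4) by (cases "n \<le> m") auto
  then obtain n' where n: "n = Suc n'" "m \<le> n'"
    by (cases n) auto
  obtain S0 L0 a0 aL0 where pre_m: "tta_pre f E th m = (S0, L0, a0, aL0)"
    by (cases "tta_pre f E th m")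
  obtain S L aS aL where pre_n: "tta_pre f E th n = (S, L, aS, aL)"
    by (cases "tta_pre f E th n")
  have "0 < m"
    using assms(2) by (simp add: switch_point_def)
  then have "0 < S0"
    using fst_tta_pre[of m f E th] pre_m by simp
  have "switch_count f E th n' = switch_count f E th m"
    using assms(3,4) n(1) by (simp add: switch_count_Suc)
  then have "merged_with a0 S0 (tta_pre f E th n)"
    using merged_with_until_next_switch[OF assms(2) pre_m n(2)] merged_with_tta_add n(1)
    by (simp add: tta_pre_def)
  then have "(real S0 + real S) *\<^sub>R aL = real S0 *\<^sub>R a0 + real S *\<^sub>R aS"
    using pre_n by (auto simp: merged_with_def)
  moreover have "f aS \<le> f aL"
    using assms(3) pre_n by (simp add: switch_point_def thetaS'_def thetaL'_def)
  ultimately have "f aS \<le> f a0"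
    using convex_on_le_of_le_weighted_mean[OF assms(1), of "real S0" "real S"] \<open>0 < S0\<close>
    by simp
  then show ?thesis
    using pre_m pre_n by (simp add: thetaS'_def)
qed

theorem mainTheorem5:
  fixes f :: "real ^ 'd \<Rightarrow> real" and \<theta> :: "nat \<Rightarrow> real ^ 'd" and E N :: nat
  assumes "convex_on UNIV f"
    and "E \<ge> 1"
    and "N \<ge> 1"
    and "switch_exists f E \<theta> (N + 1)"
  shows "F f E \<theta> (N + 1) \<le> F f E \<theta> N"
proof -
  obtain n where n: "switch_point f E \<theta> n" "switch_count f E \<theta> n = N + 1"
    using assms(4) by (auto simp: switch_exists_def)
  obtain m where m: "switch_point f E \<theta> m" "switch_count f E \<theta> m = N"
    using switch_point_of_switch_count[of N f E \<theta> n] assms(3) n(2) by auto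
  have "Q f E \<theta> (N + 1) = n" "Q f E \<theta> N = m"
    using Q_eqI n m by blast+
  then show ?thesis
    using loss_short_average_next_switch_le[OF assms(1) m(1) n(1)] m(2) n(2)
    by (simp add: F_def)
qed

end
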